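(* Let $A\geq1$ and $\varepsilon>0$ be fixed. Let $a,c\in\mathbb{Z}\setminus\{0\}$, $b\in\mathbb{Z}$ and $x_1,x_2\geq1$ be such that $|c|<x_2^{A}$. Then $$\#\{n\in\mathbb{Z}\cap[-x_1,x_1]:\ \gcd(an+b,c)>x_2\}\ll \frac{x_1\gcd(a,c)}{x_2^{1-\varepsilon}}+\tau(c),$$ where the implied constant depends only on $A$ and $\varepsilon$.
   Context: $\tau(c)$ denotes the number of positive divisors of $c$. *)

theory Defs
  imports "HOL-Analysis.Analysis"
begin

definition tau :: "int \<Rightarrow> nat" where
  "tau c = card {d::int. d > 0 \<and> d dvd c}"

end

theory Submission
  imports Defs "HOL-Computational_Algebra.Primes"
begin

(* If gcd(an + b, c) = d > x2, then d is a divisor of c exceeding x2 and d divides an + b.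
   The solutions of d | an + b form a single residue class modulo d / gcd(a, d), a modulus
   of size at least x2 / gcd(a, c), so each divisor d accounts for at most
   2 x1 gcd(a, c) / x2 + 1 values of n. Summing over the at most tau(c) divisors and using
   the divisor bound tau(c) << |c|^(eps/A) < x2^eps gives the estimate. *)

lemma card_divisors_mult_le:
  fixes a b :: nat
  shows "card {d. d dvd a * b} \<le> card {d. d dvd a} * card {d. d dvd b}"
proof (cases "a = 0 \<or> b = 0")
  case True
  then show ?thesis by auto
next
  case False
  have "{d. d dvd a * b} \<subseteq> (\<lambda>(u, v). u * v) ` ({d. d dvd a} \<times> {d. d dvd b})"
    by (auto dest!: division_decomp)
  then have "card {d. d dvd a * b} \<le> card ((\<lambda>(u, v). u * v) ` ({d. d dvd a} \<times> {d. d dvd b}))"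
    using False by (intro card_mono) auto
  also have "\<dots> \<le> card ({d. d dvd a} \<times> {d. d dvd b})"
    using False by (intro card_image_le) auto
  finally show ?thesis by (simp add: card_cartesian_product)
qed

lemma card_divisors_prod_le:
  fixes f :: "'a \<Rightarrow> nat"
  shows "card {d. d dvd (\<Prod>p\<in>P. f p)} \<le> (\<Prod>p\<in>P. card {d. d dvd f p})"
proof (induction P rule: infinite_finite_induct)
  case (insert x F)
  have "card {d. d dvd (\<Prod>p\<in>insert x F. f p)} \<le> card {d. d dvd f x} * card {d. d dvd (\<Prod>p\<in>F. f p)}"
    using insert.hyps card_divisors_mult_le by simp
  also have "\<dots> \<le> (\<Prod>p\<in>insert x F. card {d. d dvd f p})"
    using insert by simp
  finally show ?case .
qed simp_all

lemma card_divisors_prime_power: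
  fixes p :: nat
  assumes "prime p"
  shows "card {d. d dvd p ^ e} = Suc e"
proof -
  have "{d. d dvd p ^ e} = (\<lambda>i. p ^ i) ` {..e}"
    using divides_primepow_nat[OF assms] by auto
  moreover have "inj_on (\<lambda>i. p ^ i) {..e}"
    using prime_gt_1_nat[OF assms] by (auto intro: inj_onI simp: power_inject_exp)
  ultimately show ?thesis by (simp add: card_image)
qed

lemma card_divisors_le_prod_Suc_multiplicity:
  fixes n :: nat
  assumes "n > 0"
  shows "card {d. d dvd n} \<le> (\<Prod>p\<in>prime_factors n. Suc (multiplicity p n))"
proof -
  have "card {d. d dvd n} \<le> (\<Prod>p\<in>prime_factors n. card {d. d dvd p ^ multiplicity p n})"
    by (subst prime_factorization_nat[OF assms]) (rule card_divisors_prod_le)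
  also have "\<dots> = (\<Prod>p\<in>prime_factors n. Suc (multiplicity p n))"
    by (intro prod.cong) (auto simp: card_divisors_prime_power in_prime_factors_iff)
  finally show ?thesis .
qed

lemma linear_le_const_times_exp:
  fixes \<delta> :: real
  assumes "\<delta> > 0"
  obtains C where "C \<ge> 1" "\<And>e::nat. real e + 1 \<le> C * 2 powr (real e * \<delta>)"
proof
  define L where "L = \<delta> * ln 2"
  have "L > 0" using assms by (simp add: L_def)
  show "1 + 1 / L \<ge> 1" using \<open>L > 0\<close> by simp
  fix e :: nat
  have "real e + 1 \<le> (1 + 1 / L) * (1 + real e * L)"
    using \<open>L > 0\<close> by (simp add: field_simps)
  also have "1 + real e * L \<le> exp (real e * L)" by (rule exp_ge_add_one_self)
  also have "exp (real e * L) = 2 powr (real e * \<delta>)" by (simp add: powr_def L_def)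
  finally show "real e + 1 \<le> (1 + 1 / L) * 2 powr (real e * \<delta>)"
    using \<open>L > 0\<close> by (simp add: mult_left_mono)
qed

lemma Suc_le_powr_of_large_base:
  fixes \<delta> x :: real
  assumes "\<delta> > 0" "x \<ge> 2 powr (1 / \<delta>)"
  shows "real e + 1 \<le> x powr (real e * \<delta>)"
proof -
  have "x powr \<delta> \<ge> (2 powr (1 / \<delta>)) powr \<delta>"
    using assms by (intro powr_mono2) auto
  then have x\<delta>: "x powr \<delta> \<ge> 2"
    using assms by (simp add: powr_powr)
  have "real e + 1 \<le> 2 ^ e" by (induction e) auto
  also have "\<dots> \<le> (x powr \<delta>) ^ e" using x\<delta> by (intro power_mono) auto
  also have "\<dots> = (x powr \<delta>) powr real e"
    by (rule powr_realpow[symmetric]) (use x\<delta> in linarith)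
  also have "\<dots> = x powr (real e * \<delta>)"
    by (metis powr_powr mult.commute)
  finally show ?thesis .
qed

lemma card_divisors_le_powr:
  fixes \<delta> :: real
  assumes "\<delta> > 0"
  obtains K where "K > 0" "\<And>n::nat. n > 0 \<Longrightarrow> real (card {d. d dvd n}) \<le> K * real n powr \<delta>"
proof -
  obtain C where C: "C \<ge> 1" "\<And>e::nat. real e + 1 \<le> C * 2 powr (real e * \<delta>)"
    using linear_le_const_times_exp[OF assms] by blast
  define N where "N = nat \<lceil>2 powr (1 / \<delta>)\<rceil>"
  \<comment> \<open>Since e + 1 \<le> p powr (e * \<delta>) once p \<ge> 2 powr (1 / \<delta>), only primes below N
      need the constant C.\<close>
  define c where "c p = (if p < N then C else 1)" for p
  have prime_power: "real (Suc e) \<le> c p * real p powr (real e * \<delta>)" if "prime p" for p e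
  proof (cases "p < N")
    case True
    have "real (Suc e) \<le> C * 2 powr (real e * \<delta>)" using C(2)[of e] by (simp add: add.commute)
    also have "\<dots> \<le> C * real p powr (real e * \<delta>)"
      using C(1) prime_ge_2_nat[OF \<open>prime p\<close>] assms by (intro mult_left_mono powr_mono2) auto
    finally show ?thesis using True by (simp add: c_def)
  next
    case False
    then have "real p \<ge> 2 powr (1 / \<delta>)" unfolding N_def by linarith
    then show ?thesis
      using False Suc_le_powr_of_large_base[OF assms, of "real p" e] by (simp add: c_def add.commute)
  qed
  have "real (card {d. d dvd n}) \<le> C ^ N * real n powr \<delta>" if "n > 0" for n :: nat
  proof -
    let ?P = "prime_factors n" and ?m = "\<lambda>p. multiplicity p n"
    have "real (card {d. d dvd n}) \<le> (\<Prod>p\<in>?P. real (Suc (?m p)))"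
      using card_divisors_le_prod_Suc_multiplicity[OF that] by (metis of_nat_le_iff of_nat_prod)
    also have "\<dots> \<le> (\<Prod>p\<in>?P. c p * real p powr (real (?m p) * \<delta>))"
      by (intro prod_mono conjI prime_power) (auto simp: in_prime_factors_iff)
    also have "\<dots> = (\<Prod>p\<in>?P. c p) * (\<Prod>p\<in>?P. real (p ^ ?m p)) powr \<delta>"
      by (simp add: prod.distrib prod_powr_distrib powr_realpow[symmetric] powr_powr
          prime_gt_0_nat in_prime_factors_iff mult.commute)
    also have "(\<Prod>p\<in>?P. real (p ^ ?m p)) = real n"
      by (metis of_nat_prod prime_factorization_nat[OF that])
    also have "(\<Prod>p\<in>?P. c p) = C ^ card (?P \<inter> {p. p < N})"
      unfolding c_def by (simp add: prod.If_cases)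
    also have "\<dots> \<le> C ^ N"
      using C(1) card_mono[of "{..<N}" "?P \<inter> {p. p < N}"] by (intro power_increasing) auto
    finally show ?thesis by (simp add: mult_right_mono)
  qed
  moreover have "C ^ N > 0" using C(1) by simp
  ultimately show ?thesis using that by blast
qed

lemma tau_le_powr:
  fixes \<delta> :: real
  assumes "\<delta> > 0"
  obtains K where "K > 0" "\<And>c. c \<noteq> 0 \<Longrightarrow> real (tau c) \<le> K * \<bar>real_of_int c\<bar> powr \<delta>"
proof -
  obtain K where K: "K > 0" "\<And>n::nat. n > 0 \<Longrightarrow> real (card {d. d dvd n}) \<le> K * real n powr \<delta>"
    using card_divisors_le_powr[OF assms] by blast
  have tau_eq: "tau c = card {d. d dvd nat \<bar>c\<bar>}" if "c \<noteq> 0" for c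
  proof -
    have "{d. d > 0 \<and> d dvd c} = int ` {d. d dvd nat \<bar>c\<bar>}"
      using that by (force simp: image_iff int_dvd_int_iff intro!: exI[of _ "nat _"])
    then show ?thesis unfolding tau_def by (simp add: card_image)
  qed
  show ?thesis
  proof (rule that[OF K(1)])
    fix c :: int
    assume "c \<noteq> 0"
    then show "real (tau c) \<le> K * \<bar>real_of_int c\<bar> powr \<delta>"
      using K(2)[of "nat \<bar>c\<bar>"] tau_eq by simp
  qed
qed

lemma finite_int_abs_le: "finite {n::int. \<bar>real_of_int n\<bar> \<le> x}"
proof (rule finite_subset)
  show "{n::int. \<bar>real_of_int n\<bar> \<le> x} \<subseteq> {\<lfloor>-x\<rfloor>..\<lceil>x\<rceil>}"
    by (auto simp: abs_le_iff) linarith+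
qed simp

lemma card_residue_class_in_interval:
  fixes S :: "int set" and q :: int and x :: real
  assumes "q > 0" "x \<ge> 0"
    and bounded: "\<And>n. n \<in> S \<Longrightarrow> \<bar>real_of_int n\<bar> \<le> x"
    and congruent: "\<And>m n. m \<in> S \<Longrightarrow> n \<in> S \<Longrightarrow> q dvd n - m"
  shows "real (card S) \<le> 2 * x / real_of_int q + 1"
proof (cases "S = {}")
  case True
  then show ?thesis using assms by simp
next
  case False
  have "finite S"
    using finite_int_abs_le by (rule rev_finite_subset) (auto dest: bounded)
  define m where "m = Min S"
  have "m \<in> S" using Min_in[OF \<open>finite S\<close> False] by (simp add: m_def)
  define F where "F = \<lfloor>2 * x / real_of_int q\<rfloor>"
  have "S \<subseteq> (\<lambda>k. m + q * k) ` {0..F}"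
  proof
    fix n
    assume "n \<in> S"
    then obtain k where k: "n - m = q * k"
      using congruent \<open>m \<in> S\<close> by blast
    have "0 \<le> n - m" using \<open>n \<in> S\<close> \<open>finite S\<close> by (simp add: m_def)
    then have "k \<ge> 0" using k \<open>q > 0\<close> by (simp add: zero_le_mult_iff)
    have "real_of_int q * real_of_int k = real_of_int n - real_of_int m"
      using k by (metis of_int_diff of_int_mult)
    also have "\<dots> \<le> 2 * x"
      using bounded[OF \<open>n \<in> S\<close>] bounded[OF \<open>m \<in> S\<close>] by linarith
    finally have "k \<le> F"
      using \<open>q > 0\<close> unfolding F_def by (simp add: le_floor_iff field_simps)
    with k \<open>k \<ge> 0\<close> show "n \<in> (\<lambda>k. m + q * k) ` {0..F}"
      by (auto intro!: image_eqI[of _ _ k])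
  qed
  then have "card S \<le> card ((\<lambda>k. m + q * k) ` {0..F})"
    by (rule card_mono[rotated]) simp
  also have "\<dots> \<le> card {0..F}" by (rule card_image_le) simp
  finally have "int (card S) \<le> F + 1"
    using \<open>q > 0\<close> \<open>x \<ge> 0\<close> by (simp add: F_def le_nat_iff)
  then have "real (card S) \<le> real_of_int F + 1"
    by (metis of_int_le_iff of_int_of_nat_eq of_int_add of_int_1)
  then show ?thesis unfolding F_def by linarith
qed

lemma dvd_diff_of_dvd_linear:
  fixes a b d m n :: int
  assumes "d \<noteq> 0" "d dvd a * m + b" "d dvd a * n + b"
  shows "d div gcd a d dvd n - m"
proof -
  have "d dvd a * (n - m)"
    using dvd_diff[OF assms(3,2)] by (simp add: algebra_simps)
  then have "d dvd gcd (a * (n - m)) (d * (n - m))" by simp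
  then have "d dvd (n - m) * gcd a d"
    by (simp add: gcd_mult_right gcd.commute mult.commute)
  then show ?thesis using assms(1) by (simp add: div_dvd_iff_mult)
qed

lemma card_solutions_linear_congruence:
  fixes a b d :: int and x :: real
  assumes "d > 0" "x \<ge> 0"
  shows "real (card {n::int. \<bar>real_of_int n\<bar> \<le> x \<and> d dvd a * n + b})
           \<le> 2 * x * real_of_int (gcd a d) / real_of_int d + 1"
proof -
  let ?g = "gcd a d"
  have "?g > 0" "?g dvd d" using assms by auto
  then have q_pos: "d div ?g > 0" and q: "real_of_int (d div ?g) = real_of_int d / real_of_int ?g"
    using assms by (auto simp: pos_imp_zdiv_pos_iff zdvd_imp_le real_of_int_div)
  have "real (card {n::int. \<bar>real_of_int n\<bar> \<le> x \<and> d dvd a * n + b})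
      \<le> 2 * x / real_of_int (d div ?g) + 1"
    using q_pos assms(2) by (rule card_residue_class_in_interval)
      (use assms(1) in \<open>auto intro: dvd_diff_of_dvd_linear\<close>)
  then show ?thesis using \<open>?g > 0\<close> by (simp add: q)
qed

lemma card_gcd_linear_gt_le:
  fixes a b c :: int and x1 x2 :: real
  assumes "c \<noteq> 0" "x1 \<ge> 0" "x2 > 0"
  shows "real (card {n::int. \<bar>real_of_int n\<bar> \<le> x1 \<and> real_of_int (gcd (a * n + b) c) > x2})
           \<le> real (tau c) * (2 * x1 * real_of_int (gcd a c) / x2 + 1)"
proof -
  define D where "D = {d::int. d > 0 \<and> d dvd c \<and> real_of_int d > x2}"
  define T where "T d = {n::int. \<bar>real_of_int n\<bar> \<le> x1 \<and> d dvd a * n + b}" for d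
  define B where "B = 2 * x1 * real_of_int (gcd a c) / x2 + 1"
  have "finite {d::int. d > 0 \<and> d dvd c}"
    using finite_divisors_int[OF assms(1)] by (rule rev_finite_subset) auto
  moreover have "D \<subseteq> {d::int. d > 0 \<and> d dvd c}" by (auto simp: D_def)
  ultimately have "finite D" "card D \<le> tau c"
    unfolding tau_def by (auto intro: finite_subset card_mono)
  have "finite (T d)" for d
    using finite_int_abs_le by (rule rev_finite_subset) (auto simp: T_def)
  have "{n. \<bar>real_of_int n\<bar> \<le> x1 \<and> real_of_int (gcd (a * n + b) c) > x2} \<subseteq> (\<Union>d\<in>D. T d)"
    using assms(1) by (auto simp: D_def T_def intro!: exI[of _ "gcd (a * _ + b) c"])
  then have "card {n. \<bar>real_of_int n\<bar> \<le> x1 \<and> real_of_int (gcd (a * n + b) c) > x2}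
      \<le> card (\<Union>d\<in>D. T d)"
    using \<open>finite D\<close> \<open>\<And>d. finite (T d)\<close> by (intro card_mono) auto
  also have "\<dots> \<le> (\<Sum>d\<in>D. card (T d))"
    using \<open>finite D\<close> by (rule card_UN_le)
  finally have "real (card {n. \<bar>real_of_int n\<bar> \<le> x1 \<and> real_of_int (gcd (a * n + b) c) > x2})
      \<le> (\<Sum>d\<in>D. real (card (T d)))"
    unfolding of_nat_sum[symmetric] of_nat_le_iff .
  also have "\<dots> \<le> (\<Sum>d\<in>D. B)"
  proof (rule sum_mono)
    fix d
    assume "d \<in> D"
    then have d: "d > 0" "d dvd c" "real_of_int d > x2" by (auto simp: D_def)
    have "gcd a d \<le> gcd a c"
      using d assms(1) by (intro zdvd_imp_le gcd_mono) auto
    then have "2 * x1 * real_of_int (gcd a d) / real_of_int d \<le> 2 * x1 * real_of_int (gcd a c) / x2"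
      using d assms by (intro frac_le mult_left_mono) auto
    with card_solutions_linear_congruence[OF d(1) assms(2), of a b]
    show "real (card (T d)) \<le> B" unfolding T_def B_def by linarith
  qed
  also have "\<dots> \<le> real (tau c) * B"
    using \<open>card D \<le> tau c\<close> assms by (simp add: B_def mult_right_mono)
  finally show ?thesis by (simp add: B_def)
qed

lemma tau_le_powr_of_abs_lt_powr:
  fixes A \<epsilon> :: real
  assumes "A > 0" "\<epsilon> > 0"
  obtains K where "K > 0"
    "\<And>c x. c \<noteq> 0 \<Longrightarrow> real_of_int \<bar>c\<bar> < x powr A \<Longrightarrow> real (tau c) \<le> K * x powr \<epsilon>"
proof -
  have "\<epsilon> / A > 0" using assms by simp
  then obtain K where K: "K > 0" "\<And>c. c \<noteq> 0 \<Longrightarrow> real (tau c) \<le> K * \<bar>real_of_int c\<bar> powr (\<epsilon> / A)"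
    using tau_le_powr by metis
  have "real (tau c) \<le> K * x powr \<epsilon>" if "c \<noteq> 0" "real_of_int \<bar>c\<bar> < x powr A" for c x
  proof -
    have "real (tau c) \<le> K * \<bar>real_of_int c\<bar> powr (\<epsilon> / A)"
      using K(2) that(1) .
    also have "\<dots> \<le> K * (x powr A) powr (\<epsilon> / A)"
      using K(1) that(2) \<open>\<epsilon> / A > 0\<close> by (intro mult_left_mono powr_mono2) auto
    also have "\<dots> = K * x powr \<epsilon>" using assms by (simp add: powr_powr)
    finally show ?thesis .
  qed
  with K(1) show ?thesis using that by blast
qed

theorem lemma2p3:
  fixes A \<epsilon> :: real
  assumes "A \<ge> 1" and "\<epsilon> > 0"
  shows "\<exists>C>0. \<forall>(a::int) (b::int) (c::int) (x1::real) (x2::real).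
           a \<noteq> 0 \<longrightarrow> c \<noteq> 0 \<longrightarrow> x1 \<ge> 1 \<longrightarrow> x2 \<ge> 1 \<longrightarrow> real_of_int \<bar>c\<bar> < x2 powr A \<longrightarrow>
           real (card {n::int. \<bar>real_of_int n\<bar> \<le> x1 \<and> real_of_int (gcd (a * n + b) c) > x2})
             \<le> C * (x1 * real_of_int (gcd a c) / x2 powr (1 - \<epsilon>) + real (tau c))"
proof -
  obtain K where K: "K > 0"
    "\<And>c x. c \<noteq> 0 \<Longrightarrow> real_of_int \<bar>c\<bar> < x powr A \<Longrightarrow> real (tau c) \<le> K * x powr \<epsilon>"
    using tau_le_powr_of_abs_lt_powr[of A \<epsilon>] assms by auto
  have "real (card {n::int. \<bar>real_of_int n\<bar> \<le> x1 \<and> real_of_int (gcd (a * n + b) c) > x2})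
          \<le> (2 * K + 1) * (x1 * real_of_int (gcd a c) / x2 powr (1 - \<epsilon>) + real (tau c))"
    if "c \<noteq> 0" "x1 \<ge> 1" "x2 \<ge> 1" "real_of_int \<bar>c\<bar> < x2 powr A" for a b c :: int and x1 x2 :: real
  proof -
    define Y where "Y = x1 * real_of_int (gcd a c) / x2 powr (1 - \<epsilon>)"
    have "Y \<ge> 0" using that by (simp add: Y_def)
    have "real (card {n::int. \<bar>real_of_int n\<bar> \<le> x1 \<and> real_of_int (gcd (a * n + b) c) > x2})
        \<le> real (tau c) * (2 * x1 * real_of_int (gcd a c) / x2) + real (tau c)"
      using card_gcd_linear_gt_le[of c x1 x2 a b] that by (simp add: algebra_simps)
    also have "\<dots> \<le> K * x2 powr \<epsilon> * (2 * x1 * real_of_int (gcd a c) / x2) + real (tau c)"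
      using K(2)[OF that(1,4)] that by (intro add_right_mono mult_right_mono) auto
    also have "K * x2 powr \<epsilon> * (2 * x1 * real_of_int (gcd a c) / x2) = 2 * K * Y"
      using that by (simp add: Y_def powr_diff field_simps)
    also have "2 * K * Y + real (tau c) \<le> (2 * K + 1) * (Y + real (tau c))"
      using K(1) \<open>Y \<ge> 0\<close> by (simp add: algebra_simps)
    finally show ?thesis by (simp add: Y_def)
  qed
  then show ?thesis using K(1) by (intro exI[of _ "2 * K + 1"]) auto
qed

end
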